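(* For two integer matrices $M,M'\in\mathrm{Mat}(2,\mathbb{Z})$, the following are equivalent: (a) for all integers $n\ge2$, the reductions mod $n$ of $M$ and $M'$ are $\mathrm{Mat}(2,\mathbb{Z}_n)^\times$-conjugate; (b) $\det(M)=\det(M')$, $\mathrm{trace}(M)=\mathrm{trace}(M')$ and $\mathrm{mgcd}(M)=\mathrm{mgcd}(M')$.
   Context: For $M=\begin{pmatrix}a&b\\c&d\end{pmatrix}$, $\mathrm{mgcd}(M)=\gcd(b,c,d-a)$, a non-negative integer, equal to $0$ iff $b=c=d-a=0$. $\mathrm{Mat}(2,\mathbb{Z}_n)^\times$ is the group of invertible $2\times2$ matrices over $\mathbb{Z}_n=\mathbb{Z}/n\mathbb{Z}$. *)

theory Defs
  imports "HOL-Analysis.Analysis" "HOL-Number_Theory.Cong"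
begin

text \<open>2x2 integer matrices are represented as int^2^2; entry (i,j) is A $ i $ j,
  with indices 1 and 2 of type 2.\<close>

definition mtrace2 :: "int^2^2 \<Rightarrow> int" where
  "mtrace2 M = M $ 1 $ 1 + M $ 2 $ 2"

definition mgcd :: "int^2^2 \<Rightarrow> int" where
  "mgcd M = gcd (M $ 1 $ 2) (gcd (M $ 2 $ 1) (M $ 2 $ 2 - M $ 1 $ 1))"

definition mat_cong :: "int \<Rightarrow> int^2^2 \<Rightarrow> int^2^2 \<Rightarrow> bool" where
  "mat_cong n A B \<longleftrightarrow> (\<forall>i j. [A $ i $ j = B $ i $ j] (mod n))"

text \<open>The reductions mod n of M and M' are conjugate by an element of Mat(2,Z_n)^*:
  there are lifts P, Q of mutually inverse matrices over Z_n with P M Q = M' over Z_n.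
  (Every matrix over Z_n lifts to an integer matrix.)\<close>
definition conj_mod :: "int \<Rightarrow> int^2^2 \<Rightarrow> int^2^2 \<Rightarrow> bool" where
  "conj_mod n M M' \<longleftrightarrow> (\<exists>P Q :: int^2^2.
      mat_cong n (P ** Q) (mat 1) \<and> mat_cong n (Q ** P) (mat 1) \<and>
      mat_cong n (P ** M ** Q) M')"

end

theory Submission
  imports Defs "HOL-Computational_Algebra.Primes"
begin

text \<open>
  Conjugation modulo n preserves determinant and trace modulo n, and it preserves being a
  scalar matrix modulo n, which happens exactly when n divides mgcd; letting n vary
  forces the three invariants to agree.

  Conversely, let g = mgcd M > 0 and write M = a I + g N with N = [[0, b1], [c1, e1]]
  primitive. The primitive binary quadratic form c1 x^2 + e1 x y - b1 y^2 takes a value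
  prime to n at some vector v, and the matrix S with columns v and N v + (a div g) v has
  that value as determinant and satisfies M S = S K, where K has first column
  (a mod g, g), trace tr M and determinant det M. The residue a mod g is itself fixed by
  g, trace and determinant, since the discriminant (d - a)^2 + 4 b c = tr^2 - 4 det is.
  Hence two matrices with equal invariants are intertwined with the same K by matrices
  invertible modulo n, and so are conjugate modulo n.
\<close>

definition mat2x2 :: "int \<Rightarrow> int \<Rightarrow> int \<Rightarrow> int \<Rightarrow> int^2^2" where
  "mat2x2 a b c d = (\<chi> i j. if i = 1 then (if j = 1 then a else b) else (if j = 1 then c else d))"

lemma mat2x2_nth [simp]:
  "mat2x2 a b c d $ 1 $ 1 = a" "mat2x2 a b c d $ 1 $ 2 = b"
  "mat2x2 a b c d $ 2 $ 1 = c" "mat2x2 a b c d $ 2 $ 2 = d"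
  by (simp_all add: mat2x2_def)

lemma mat2x2_eta: "M = mat2x2 (M$1$1) (M$1$2) (M$2$1) (M$2$2)"
  by (simp add: vec_eq_iff forall_2)

lemma mat2x2_eq_iff:
  "mat2x2 a b c d = mat2x2 a' b' c' d' \<longleftrightarrow> a = a' \<and> b = b' \<and> c = c' \<and> d = d'"
  by (simp add: vec_eq_iff forall_2)

lemma mat2x2_mult:
  "mat2x2 a b c d ** mat2x2 e f g h = mat2x2 (a*e+b*g) (a*f+b*h) (c*e+d*g) (c*f+d*h)"
  by (simp add: vec_eq_iff forall_2 matrix_matrix_mult_def sum_2)

lemma mat_eq_mat2x2: "(mat x :: int^2^2) = mat2x2 x 0 0 x"
  by (simp add: vec_eq_iff forall_2 mat_def)

lemma det_mat2x2: "det (mat2x2 a b c d) = a*d - b*c"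
  by (simp add: det_2)

lemma mat_commute: "mat x ** (A::int^2^2) = A ** mat x"
  by (subst (1 2) mat2x2_eta[of A]) (simp add: mat_eq_mat2x2 mat2x2_mult mat2x2_eq_iff)

lemma mtrace2_mult_commute: "mtrace2 (A ** B) = mtrace2 (B ** A)"
  by (simp add: mtrace2_def matrix_matrix_mult_def sum_2 algebra_simps)

lemma mat_mult_mat: "mat x ** (mat y :: int^2^2) = mat (x*y)"
  by (simp add: mat_eq_mat2x2 mat2x2_mult)

definition adj2 :: "int^2^2 \<Rightarrow> int^2^2" where
  "adj2 S = mat2x2 (S$2$2) (-S$1$2) (-S$2$1) (S$1$1)"

lemma adj2_mult: "adj2 S ** S = mat (det S)"
  by (subst (1 2) mat2x2_eta[of S]) (simp add: adj2_def mat_eq_mat2x2 mat2x2_mult mat2x2_eq_iff det_mat2x2)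

lemma mult_adj2: "S ** adj2 S = mat (det S)"
  by (subst (1 2) mat2x2_eta[of S]) (simp add: adj2_def mat_eq_mat2x2 mat2x2_mult mat2x2_eq_iff det_mat2x2)

lemma mat_cong_refl: "mat_cong n A A"
  by (simp add: mat_cong_def)

lemma mat_cong_sym: "mat_cong n A B \<Longrightarrow> mat_cong n B A"
  by (simp add: mat_cong_def cong_sym)

lemma mat_cong_trans: "mat_cong n A B \<Longrightarrow> mat_cong n B C \<Longrightarrow> mat_cong n A C"
  unfolding mat_cong_def by (blast intro: cong_trans)

lemma mat_cong_mult: "mat_cong n A A' \<Longrightarrow> mat_cong n B B' \<Longrightarrow> mat_cong n (A ** B) (A' ** B')"
  unfolding mat_cong_def matrix_matrix_mult_def by (simp add: sum_2 cong_add cong_mult)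

lemma mat_cong_det: "mat_cong n A B \<Longrightarrow> [det A = det B] (mod n)"
  unfolding mat_cong_def det_2 by (simp add: cong_diff cong_mult)

lemma mat_cong_mtrace2: "mat_cong n A B \<Longrightarrow> [mtrace2 A = mtrace2 B] (mod n)"
  unfolding mat_cong_def mtrace2_def by (simp add: cong_add)

lemma mat_cong_scalar_mult: "[x = 1] (mod n) \<Longrightarrow> mat_cong n (mat x ** A) A"
proof -
  assume "[x = 1] (mod n)"
  then have "[x * A $ i $ j = A $ i $ j] (mod n)" for i j
    using cong_scalar_right[of x 1 n] by simp
  moreover have "(mat x ** A) $ i $ j = x * A $ i $ j" for i j
    using exhaust_2[of i] by (auto simp: matrix_matrix_mult_def mat_def sum_2)
  ultimately show ?thesis
    by (simp add: mat_cong_def)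
qed

lemma dvd_mgcd_iff_cong_scalar: "n dvd mgcd M \<longleftrightarrow> (\<exists>a. mat_cong n M (mat a))"
proof
  assume "n dvd mgcd M"
  then have "mat_cong n M (mat (M$1$1))"
    by (auto simp: mat_cong_def forall_2 mat_def mgcd_def cong_0_iff cong_iff_dvd_diff
        dest: dvd_trans[OF _ gcd_dvd2] dvd_trans[OF _ gcd_dvd1])
  then show "\<exists>a. mat_cong n M (mat a)" ..
next
  assume "\<exists>a. mat_cong n M (mat a)"
  then obtain a where H: "\<And>i j. [M$i$j = mat a $ i $ j] (mod n)"
    by (auto simp: mat_cong_def)
  have "[M$1$2 = 0] (mod n)" "[M$2$1 = 0] (mod n)"
    using H[of 1 2] H[of 2 1] by (simp_all add: mat_def)
  moreover have "[M$2$2 - M$1$1 = a - a] (mod n)"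
    using cong_diff[OF H[of 2 2] H[of 1 1]] by (simp add: mat_def)
  ultimately show "n dvd mgcd M"
    by (simp add: mgcd_def cong_0_iff)
qed

definition mat_inverse_mod :: "int \<Rightarrow> int^2^2 \<Rightarrow> int^2^2 \<Rightarrow> bool" where
  "mat_inverse_mod n P Q \<longleftrightarrow> mat_cong n (P ** Q) (mat 1) \<and> mat_cong n (Q ** P) (mat 1)"

lemma conj_mod_iff_inverse_mod:
  "conj_mod n M M' \<longleftrightarrow> (\<exists>P Q. mat_inverse_mod n P Q \<and> mat_cong n (P ** M ** Q) M')"
  by (simp add: conj_mod_def mat_inverse_mod_def)

lemma mat_inverse_mod_sym: "mat_inverse_mod n P Q \<Longrightarrow> mat_inverse_mod n Q P"
  by (simp add: mat_inverse_mod_def)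

lemma mat_cong_sandwich:
  assumes "mat_cong n (Q ** P) (mat 1)"
  shows "mat_cong n (A ** Q ** P ** B) (A ** B)"
proof -
  have "mat_cong n (A ** (Q ** P) ** B) (A ** mat 1 ** B)"
    by (intro mat_cong_mult mat_cong_refl assms)
  then show ?thesis
    by (simp add: matrix_mul_assoc)
qed

lemma mat_inverse_mod_mult:
  assumes "mat_inverse_mod n P Q" "mat_inverse_mod n P' Q'"
  shows "mat_inverse_mod n (P' ** P) (Q ** Q')"
proof -
  have "mat_cong n (P' ** P ** Q ** Q') (P' ** Q')" "mat_cong n (Q ** Q' ** P' ** P) (Q ** P)"
    using assms by (simp_all add: mat_inverse_mod_def mat_cong_sandwich)
  then show ?thesis
    using assms by (simp add: mat_inverse_mod_def matrix_mul_assoc) (blast intro: mat_cong_trans)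
qed

lemma mat_inverse_mod_if_coprime_det:
  assumes "coprime (det S) n"
  shows "\<exists>T. mat_inverse_mod n T S"
proof -
  obtain u where u: "[det S * u = 1] (mod n)"
    using cong_solve_coprime_int[OF assms] by blast
  have "mat u ** adj2 S ** S = mat (det S * u)"
    by (metis matrix_mul_assoc adj2_mult mat_mult_mat mult.commute)
  moreover have "S ** (mat u ** adj2 S) = mat (det S * u)"
    by (metis matrix_mul_assoc mat_commute mult_adj2 mat_mult_mat mult.commute)
  moreover have "mat_cong n (mat (det S * u)) (mat 1)"
    by (metis mat_cong_scalar_mult[OF u] matrix_mul_rid)
  ultimately show ?thesis
    by (metis mat_inverse_mod_def)
qed

lemma conj_mod_refl: "conj_mod n M M"
  unfolding conj_mod_def by (metis mat_cong_refl matrix_mul_lid matrix_mul_rid)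

lemma conj_mod_sym: "conj_mod n M M' \<Longrightarrow> conj_mod n M' M"
proof -
  assume "conj_mod n M M'"
  then obtain P Q where PQ: "mat_inverse_mod n P Q" and M': "mat_cong n (P ** M ** Q) M'"
    by (auto simp: conj_mod_iff_inverse_mod)
  have "mat_cong n (Q ** M' ** P) (Q ** (P ** M ** Q) ** P)"
    by (intro mat_cong_mult mat_cong_refl mat_cong_sym[OF M'])
  moreover have "mat_cong n ((Q ** P) ** M ** (Q ** P)) (mat 1 ** M ** mat 1)"
    using PQ by (intro mat_cong_mult mat_cong_refl) (simp_all add: mat_inverse_mod_def)
  ultimately have "mat_cong n (Q ** M' ** P) M"
    by (simp add: matrix_mul_assoc) (blast intro: mat_cong_trans)
  then show ?thesis
    using mat_inverse_mod_sym[OF PQ] by (auto simp: conj_mod_iff_inverse_mod)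
qed

lemma conj_mod_trans:
  assumes "conj_mod n M M'" "conj_mod n M' M''"
  shows "conj_mod n M M''"
proof -
  obtain P Q where PQ: "mat_inverse_mod n P Q" and M': "mat_cong n (P ** M ** Q) M'"
    using assms(1) by (auto simp: conj_mod_iff_inverse_mod)
  obtain P' Q' where P'Q': "mat_inverse_mod n P' Q'" and M'': "mat_cong n (P' ** M' ** Q') M''"
    using assms(2) by (auto simp: conj_mod_iff_inverse_mod)
  have "mat_cong n (P' ** (P ** M ** Q) ** Q') (P' ** M' ** Q')"
    by (intro mat_cong_mult mat_cong_refl M')
  then have "mat_cong n ((P' ** P) ** M ** (Q ** Q')) M''"
    using M'' by (simp add: matrix_mul_assoc) (blast intro: mat_cong_trans)
  then show ?thesis
    using mat_inverse_mod_mult[OF PQ P'Q'] by (auto simp: conj_mod_iff_inverse_mod)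
qed

lemma conj_mod_if_intertwined:
  assumes "M ** S = S ** K" "coprime (det S) n"
  shows "conj_mod n M K"
proof -
  obtain T where T: "mat_inverse_mod n T S"
    using mat_inverse_mod_if_coprime_det[OF assms(2)] ..
  have "T ** M ** S = T ** S ** K"
    using assms(1) by (metis matrix_mul_assoc)
  moreover have "mat_cong n (T ** S ** K) K"
    using mat_cong_sandwich[of n T S "mat 1" K] T by (simp add: mat_inverse_mod_def)
  ultimately have "mat_cong n (T ** M ** S) K"
    by simp
  then show ?thesis
    using T unfolding conj_mod_iff_inverse_mod by blast
qed

lemma conj_mod_det_cong: "conj_mod n M M' \<Longrightarrow> [det M = det M'] (mod n)"
proof -
  assume "conj_mod n M M'"
  then obtain P Q where PQ: "mat_cong n (P ** Q) (mat 1)" and M': "mat_cong n (P ** M ** Q) M'"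
    by (auto simp: conj_mod_def)
  have "det (P ** M ** Q) = det (P ** Q) * det M"
    by (simp add: det_mul)
  moreover have "[det (P ** Q) * det M = det M] (mod n)"
    using cong_scalar_right[OF mat_cong_det[OF PQ], of "det M"] by simp
  ultimately show ?thesis
    using mat_cong_det[OF M'] by (metis cong_sym cong_trans)
qed

lemma conj_mod_mtrace2_cong: "conj_mod n M M' \<Longrightarrow> [mtrace2 M = mtrace2 M'] (mod n)"
proof -
  assume "conj_mod n M M'"
  then obtain P Q where QP: "mat_cong n (Q ** P) (mat 1)" and M': "mat_cong n (P ** M ** Q) M'"
    by (auto simp: conj_mod_def)
  have "mtrace2 (P ** M ** Q) = mtrace2 ((Q ** P) ** M)"
    by (metis matrix_mul_assoc mtrace2_mult_commute)
  moreover have "[mtrace2 ((Q ** P) ** M) = mtrace2 M] (mod n)"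
    using mat_cong_mtrace2[OF mat_cong_mult[OF QP mat_cong_refl]] by simp
  ultimately show ?thesis
    using mat_cong_mtrace2[OF M'] by (metis cong_sym cong_trans)
qed

lemma conj_mod_cong_scalar:
  assumes "conj_mod n M M'" "mat_cong n M (mat a)"
  shows "mat_cong n M' (mat a)"
proof -
  obtain P Q where PQ: "mat_cong n (P ** Q) (mat 1)" and M': "mat_cong n (P ** M ** Q) M'"
    using assms(1) by (auto simp: conj_mod_def)
  have "mat_cong n (P ** M ** Q) (P ** mat a ** Q)"
    by (intro mat_cong_mult mat_cong_refl assms(2))
  moreover have "P ** mat a ** Q = mat a ** (P ** Q)"
    by (simp only: mat_commute matrix_mul_assoc)
  moreover have "mat_cong n (mat a ** (P ** Q)) (mat a ** mat 1)"
    by (intro mat_cong_mult mat_cong_refl PQ)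
  ultimately have "mat_cong n (P ** M ** Q) (mat a)"
    by (metis mat_cong_trans matrix_mul_rid)
  then show ?thesis
    using M' by (blast intro: mat_cong_sym mat_cong_trans)
qed

lemma conj_mod_dvd_mgcd: "conj_mod n M M' \<Longrightarrow> n dvd mgcd M \<Longrightarrow> n dvd mgcd M'"
  by (meson dvd_mgcd_iff_cong_scalar conj_mod_cong_scalar)

lemma int_eq_0_iff_ge2_dvd: "(x::int) = 0 \<longleftrightarrow> (\<forall>n\<ge>2. n dvd x)"
proof
  assume "\<forall>n\<ge>2. n dvd x"
  then have "\<bar>x\<bar> + 2 dvd x"
    by simp
  then show "x = 0"
    using dvd_imp_le_int[of x "\<bar>x\<bar> + 2"] by (cases "x = 0") auto
qed simp

lemma eq_if_cong_all_ge2: "\<forall>n\<ge>2. [x = y] (mod n) \<Longrightarrow> (x::int) = y"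
  using int_eq_0_iff_ge2_dvd[of "x - y"] by (simp add: cong_iff_dvd_diff)

lemma nonneg_eq_if_same_ge2_divisors:
  fixes g g' :: int
  assumes "g \<ge> 0" "g' \<ge> 0" and same: "\<forall>n\<ge>2. n dvd g \<longleftrightarrow> n dvd g'"
  shows "g = g'"
proof -
  have dvd_iff: "n dvd g \<longleftrightarrow> n dvd g'" for n
  proof -
    consider "n \<ge> 2" | "-n \<ge> 2" | "n = 0" | "n = 1 \<or> n = -1"
      by linarith
    then show ?thesis
    proof cases
      case 1
      then show ?thesis
        using same by blast
    next
      case 2
      then show ?thesis
        using same[rule_format, of "-n"] by simp
    next
      case 3
      have "g = 0 \<longleftrightarrow> g' = 0"
        using same by (simp add: int_eq_0_iff_ge2_dvd)
      with 3 show ?thesis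
        by simp
    qed auto
  qed
  have "g dvd g'" "g' dvd g"
    using dvd_iff[of g] dvd_iff[of g'] by simp_all
  then show ?thesis
    using zdvd_antisym_nonneg assms(1,2) by blast
qed

subsection \<open>Primitive binary quadratic forms\<close>

lemma prime_dvd_prod_primes_iff:
  fixes X :: "int set"
  assumes "finite X" "\<forall>q\<in>X. prime q" "prime p"
  shows "p dvd \<Prod>X \<longleftrightarrow> p \<in> X"
proof
  assume "p dvd \<Prod>X"
  then obtain q where "q \<in> X" "p dvd q"
    using prime_dvd_prod_iff[OF assms(1,3), of id] by auto
  then show "p \<in> X"
    using assms primes_dvd_imp_eq by blast
qed (use assms dvd_prodI[of X p id] in simp)

lemma prime_not_dvd_quadratic_form:
  fixes A B C x y p :: int
  assumes p: "prime p" and prim: "\<not> p dvd gcd A (gcd B C)"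
    and x: "p dvd x \<longleftrightarrow> p dvd A \<and> \<not> p dvd C" and y: "p dvd y \<longleftrightarrow> \<not> p dvd A"
  shows "\<not> p dvd A*x^2 + B*x*y + C*y^2"
proof
  assume f: "p dvd A*x^2 + B*x*y + C*y^2"
  consider "\<not> p dvd A" | "p dvd A" "\<not> p dvd C" | "p dvd A" "p dvd C"
    by blast
  then show False
  proof cases
    case 1
    with x y have "p dvd y" "\<not> p dvd x"
      by auto
    then have "p dvd B*x*y + C*y^2"
      by (simp add: power2_eq_square)
    then have "p dvd A*x^2"
      using f by (metis add.assoc dvd_add_left_iff)
    with 1 \<open>\<not> p dvd x\<close> p show False
      by (simp add: prime_dvd_mult_iff prime_dvd_power_iff)
  next
    case 2
    with x y have "p dvd x" "\<not> p dvd y"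
      by auto
    then have "p dvd A*x^2 + B*x*y"
      by (simp add: power2_eq_square)
    then have "p dvd C*y^2"
      using f by (metis dvd_add_right_iff)
    with 2 \<open>\<not> p dvd y\<close> p show False
      by (simp add: prime_dvd_mult_iff prime_dvd_power_iff)
  next
    case 3
    with x y prim have "\<not> p dvd x" "\<not> p dvd y" "\<not> p dvd B"
      by auto
    moreover have "p dvd A*x^2 + C*y^2"
      using 3 by simp
    then have "p dvd B*x*y"
      using f by (metis add.commute add.left_commute dvd_add_right_iff)
    ultimately show False
      using p by (simp add: prime_dvd_mult_iff)
  qed
qed

lemma primitive_form_represents_coprime:
  fixes A B C m :: int
  assumes m: "m \<noteq> 0" and prim: "gcd A (gcd B C) = 1"
  shows "\<exists>x y. coprime (A*x^2 + B*x*y + C*y^2) m"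
proof -
  define X where "X = {p. prime p \<and> p dvd m \<and> p dvd A \<and> \<not> p dvd C}"
  define Y where "Y = {p. prime p \<and> p dvd m \<and> \<not> p dvd A}"
  have "finite X" "finite Y"
    by (rule finite_subset[OF _ finite_prime_divisors[OF m]], auto simp: X_def Y_def)+
  then have X: "p dvd \<Prod>X \<longleftrightarrow> p \<in> X" and Y: "p dvd \<Prod>Y \<longleftrightarrow> p \<in> Y" if "prime p" for p
    using that by (simp_all add: prime_dvd_prod_primes_iff X_def Y_def)
  let ?f = "A*(\<Prod>X)^2 + B*(\<Prod>X)*(\<Prod>Y) + C*(\<Prod>Y)^2"
  have "coprime ?f m"
  proof (rule ccontr)
    assume "\<not> coprime ?f m"
    then have "\<not> is_unit (gcd ?f m)" "gcd ?f m \<noteq> 0"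
      using m by (simp_all add: coprime_iff_gcd_eq_1)
    then obtain p where p: "prime p" "p dvd gcd ?f m"
      using prime_divisorE by blast
    then have "p dvd ?f" "p dvd m"
      by (auto intro: dvd_trans)
    have "\<not> p dvd gcd A (gcd B C)"
      using prim p(1) not_prime_unit by auto
    moreover have "p dvd \<Prod>X \<longleftrightarrow> p dvd A \<and> \<not> p dvd C" "p dvd \<Prod>Y \<longleftrightarrow> \<not> p dvd A"
      using X[OF p(1)] Y[OF p(1)] p(1) \<open>p dvd m\<close> by (auto simp: X_def Y_def)
    ultimately show False
      using prime_not_dvd_quadratic_form[OF p(1)] \<open>p dvd ?f\<close> by blast
  qed
  then show ?thesis
    by blast
qed

subsection \<open>A normal form for conjugacy modulo n\<close>

lemma mgcd_nonneg: "mgcd M \<ge> 0"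
  by (simp add: mgcd_def)

lemma mgcd_dvd: "mgcd M dvd M$1$2" "mgcd M dvd M$2$1" "mgcd M dvd M$2$2 - M$1$1"
  by (auto simp: mgcd_def intro: dvd_trans[OF gcd_dvd2])

lemma eq_if_mgcd_eq_0:
  "mgcd M = 0 \<Longrightarrow> mgcd M' = 0 \<Longrightarrow> mtrace2 M = mtrace2 M' \<Longrightarrow> M = M'"
  by (simp add: mgcd_def mtrace2_def vec_eq_iff forall_2)

text \<open>The matrix with first column (r, g), trace t and determinant \<delta>, provided g divides
  r (t - r) - \<delta>.\<close>
definition normal_form2 :: "int \<Rightarrow> int \<Rightarrow> int \<Rightarrow> int \<Rightarrow> int^2^2" where
  "normal_form2 g r t \<delta> = mat2x2 r ((r * (t - r) - \<delta>) div g) g (t - r)"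

lemma intertwined_normal_form2:
  assumes "mgcd M > 0" and n: "n \<noteq> 0"
  shows "\<exists>S. coprime (det S) n \<and>
    M ** S = S ** normal_form2 (mgcd M) (M$1$1 mod mgcd M) (mtrace2 M) (det M)"
proof -
  obtain a b c d where M: "M = mat2x2 a b c d"
    by (metis mat2x2_eta)
  define g where "g = mgcd M"
  have "g > 0" and g_eq: "g = gcd b (gcd c (d - a))"
    using assms(1) by (simp_all add: g_def M mgcd_def)
  have "g dvd b" "g dvd c" "g dvd d - a"
    using mgcd_dvd[of M] by (simp_all add: g_def M)
  then obtain b1 c1 e1 where b1: "b = g*b1" and c1: "c = g*c1" and e1: "d - a = g*e1"
    by (metis dvdE)
  have "g = g * gcd b1 (gcd c1 e1)"
    using g_eq \<open>g > 0\<close> by (simp add: b1 c1 e1 gcd_mult_left abs_mult)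
  then have "gcd c1 (gcd e1 (-b1)) = 1"
    using \<open>g > 0\<close> by (simp add: ac_simps)
  then have "\<exists>x y. coprime (c1*x^2 + e1*x*y + (-b1)*y^2) n"
    by (rule primitive_form_represents_coprime[OF n])
  then obtain x y where xy: "coprime (c1*x^2 + e1*x*y + (-b1)*y^2) n"
    by blast
  define r where "r = a mod g"
  define k where "k = a div g"
  define Y where "Y = g*(b1*c1 - k^2 - k*e1)"
  \<comment> \<open>columns v = (x, y) and N v + k v, where M = a I + g N\<close>
  define S where "S = mat2x2 x (x*k + b1*y) y (y*k + c1*x + e1*y)"
  have a: "a = r + g*k"
    by (simp add: r_def k_def)
  have d: "d = r + g*k + g*e1"
    using e1 a by simp
  have "det S = c1*x^2 + e1*x*y + (-b1)*y^2"
    by (simp add: S_def det_mat2x2 power2_eq_square algebra_simps)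
  moreover have "M ** S = S ** mat2x2 r Y g (a + d - r)"
    unfolding M S_def Y_def b1 c1 d a mat2x2_mult mat2x2_eq_iff
    by (simp add: power2_eq_square algebra_simps)
  moreover have "r * (a + d - r) - (a*d - b*c) = g*Y"
    unfolding Y_def b1 c1 d a by (simp add: power2_eq_square algebra_simps)
  then have "normal_form2 g r (a + d) (a*d - b*c) = mat2x2 r Y g (a + d - r)"
    using \<open>g > 0\<close> by (simp add: normal_form2_def)
  moreover have "normal_form2 (mgcd M) (M$1$1 mod mgcd M) (mtrace2 M) (det M) =
      normal_form2 g r (a + d) (a*d - b*c)"
    by (simp add: g_def r_def M mtrace2_def det_mat2x2)
  ultimately show ?thesis
    using xy by (intro exI[of _ S]) simp
qed

lemma cong_diag_if_same_trace_det:
  fixes a b c d a' b' c' d' g :: int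
  assumes "g dvd b" "g dvd c" "g dvd d - a" "g dvd b'" "g dvd c'" "g dvd d' - a'"
    and tr: "a + d = a' + d'" and det: "a*d - b*c = a'*d' - b'*c'"
  shows "[a = a'] (mod g)"
proof (cases "g = 0")
  case True
  then show ?thesis
    using assms by simp
next
  case False
  from assms obtain b1 c1 e b1' c1' e'
    where b: "b = g*b1" "c = g*c1" "d - a = g*e" "b' = g*b1'" "c' = g*c1'" "d' - a' = g*e'"
    by (elim dvdE)
  have disc: "\<And>a b c d :: int. (d - a)^2 + 4*b*c = (a + d)^2 - 4*(a*d - b*c)"
    by (simp add: power2_eq_square algebra_simps)
  have "(d - a)^2 + 4*b*c = (d' - a')^2 + 4*b'*c'"
    unfolding disc tr det ..
  then have "g^2 * (e^2 + 4*b1*c1) = g^2 * (e'^2 + 4*b1'*c1')"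
    unfolding b by (simp add: power2_eq_square algebra_simps)
  then have "e^2 = e'^2 + 4*b1'*c1' - 4*b1*c1"
    using False by simp
  then have "even (e^2) \<longleftrightarrow> even (e'^2)"
    by simp
  then have "even e \<longleftrightarrow> even e'"
    by simp
  then have "even (e' - e)"
    by simp
  then obtain u where u: "e' - e = 2*u"
    by blast
  have "2*(a - a') = g*(e' - e)"
    using tr b(3,6) by (simp add: algebra_simps)
  then have "a - a' = g*u"
    using u by (simp add: ac_simps)
  then show ?thesis
    by (simp add: cong_iff_dvd_diff)
qed

lemma mod_mgcd_eq_if_same_invariants:
  assumes "det M = det M'" "mtrace2 M = mtrace2 M'" "mgcd M = mgcd M'"
  shows "M$1$1 mod mgcd M = M'$1$1 mod mgcd M'"
proof -
  have "[M$1$1 = M'$1$1] (mod mgcd M)"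
    using assms(2,1) unfolding det_2 mtrace2_def
    by (rule cong_diag_if_same_trace_det[OF mgcd_dvd[of M] mgcd_dvd[of M', folded assms(3)]])
  then show ?thesis
    using assms(3) by (simp add: cong_def)
qed

lemma conj_mod_if_same_invariants:
  assumes H: "det M = det M'" "mtrace2 M = mtrace2 M'" "mgcd M = mgcd M'" and "n \<noteq> 0"
  shows "conj_mod n M M'"
proof (cases "mgcd M = 0")
  case True
  then have "M = M'"
    using H by (intro eq_if_mgcd_eq_0) auto
  then show ?thesis
    by (simp add: conj_mod_refl)
next
  case False
  then have "mgcd M > 0" "mgcd M' > 0"
    using H mgcd_nonneg[of M] by auto
  define K where "K = normal_form2 (mgcd M) (M$1$1 mod mgcd M) (mtrace2 M) (det M)"
  have K': "K = normal_form2 (mgcd M') (M'$1$1 mod mgcd M') (mtrace2 M') (det M')"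
    using mod_mgcd_eq_if_same_invariants[OF H] H by (simp add: K_def)
  obtain S where "coprime (det S) n" "M ** S = S ** K"
    using intertwined_normal_form2[OF \<open>mgcd M > 0\<close> \<open>n \<noteq> 0\<close>] unfolding K_def by blast
  moreover obtain S' where "coprime (det S') n" "M' ** S' = S' ** K"
    using intertwined_normal_form2[OF \<open>mgcd M' > 0\<close> \<open>n \<noteq> 0\<close>] unfolding K' by blast
  ultimately have "conj_mod n M K" "conj_mod n M' K"
    by (simp_all add: conj_mod_if_intertwined)
  then show ?thesis
    by (metis conj_mod_sym conj_mod_trans)
qed

theorem theorem41:
  fixes M M' :: "int^2^2"
  shows "(\<forall>n::int. n \<ge> 2 \<longrightarrow> conj_mod n M M') \<longleftrightarrow>
         (det M = det M' \<and> mtrace2 M = mtrace2 M' \<and> mgcd M = mgcd M')"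
proof
  assume H: "\<forall>n::int. n \<ge> 2 \<longrightarrow> conj_mod n M M'"
  have "det M = det M'"
    by (rule eq_if_cong_all_ge2) (use H conj_mod_det_cong in blast)
  moreover have "mtrace2 M = mtrace2 M'"
    by (rule eq_if_cong_all_ge2) (use H conj_mod_mtrace2_cong in blast)
  moreover have "mgcd M = mgcd M'"
    using H conj_mod_dvd_mgcd conj_mod_sym
    by (intro nonneg_eq_if_same_ge2_divisors mgcd_nonneg) blast
  ultimately show "det M = det M' \<and> mtrace2 M = mtrace2 M' \<and> mgcd M = mgcd M'"
    by blast
next
  assume "det M = det M' \<and> mtrace2 M = mtrace2 M' \<and> mgcd M = mgcd M'"
  then show "\<forall>n::int. n \<ge> 2 \<longrightarrow> conj_mod n M M'"
    by (auto intro: conj_mod_if_same_invariants)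
qed

end
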